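(* Let $\Omega\subset\mathbb{R}^n$ be a bounded simply connected open set with smooth boundary, $\sigma_0\in C^2(\overline{\Omega})$ with $\sigma_0>0$ on $\overline{\Omega}$, and let $u_0$ satisfy $\nabla\cdot\sigma_0\nabla u_0=0$ in $\Omega$ with $u_0|_{\partial\Omega}=f\in C^{2,\alpha}(\partial\Omega)$ and $\nabla u_0\neq0$ on $\overline{\Omega}$. Then there exists $C>0$ depending on $u_0$ and $\Omega$ such that $$\|h\|_{L^2(\Omega)}\le C\,\|\nabla u_0\cdot\nabla h\|_{L^2(\Omega)}$$ for every $h\in H^1(\Omega)$ with $h|_{\partial\Omega}=0$. *)

theory Defs
  imports "HOL-Analysis.Analysis"
begin

definition pderiv :: "('a::euclidean_space \<Rightarrow> real) \<Rightarrow> 'a \<Rightarrow> 'a \<Rightarrow> real" where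
  "pderiv f i x = frechet_derivative f (at x) i"

definition grad :: "('a::euclidean_space \<Rightarrow> real) \<Rightarrow> 'a \<Rightarrow> 'a" where
  "grad f x = (\<Sum>i\<in>Basis. pderiv f i x *\<^sub>R i)"

definition divergence :: "('a::euclidean_space \<Rightarrow> 'a) \<Rightarrow> 'a \<Rightarrow> real" where
  "divergence V x = (\<Sum>i\<in>Basis. pderiv (\<lambda>y. V y \<bullet> i) i x)"

fun Ck :: "nat \<Rightarrow> 'a::euclidean_space set \<Rightarrow> ('a \<Rightarrow> real) \<Rightarrow> bool" where
  "Ck 0 S f = continuous_on S f"
| "Ck (Suc k) S f = (continuous_on S f \<and> f differentiable_on S \<and>
                      (\<forall>i\<in>Basis. Ck k S (pderiv f i)))"

definition Cinf :: "'a::euclidean_space set \<Rightarrow> ('a \<Rightarrow> real) \<Rightarrow> bool" where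
  "Cinf S f = (\<forall>k. Ck k S f)"

(* C^2 up to the boundary: restriction of a C^2 function on an open neighbourhood of the closure *)
definition C2_closure :: "'a::euclidean_space set \<Rightarrow> ('a \<Rightarrow> real) \<Rightarrow> bool" where
  "C2_closure \<Omega> s = (\<exists>U F. open U \<and> closure \<Omega> \<subseteq> U \<and> Ck 2 U F \<and> (\<forall>x\<in>closure \<Omega>. F x = s x))"

(* smooth boundary: locally a regular sublevel set of a C^\<infinity> defining function *)
definition smooth_boundary :: "'a::euclidean_space set \<Rightarrow> bool" where
  "smooth_boundary \<Omega> = (\<forall>z\<in>frontier \<Omega>. \<exists>r>0. \<exists>\<phi>. Cinf (ball z r) \<phi> \<and> grad \<phi> z \<noteq> 0 \<and>
      \<Omega> \<inter> ball z r = {x\<in>ball z r. \<phi> x < 0})"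

(* C^{2,alpha}(\<partial>\<Omega>): restriction to the boundary of a C^{2,alpha}(R^n) function *)
definition C2alpha_boundary :: "real \<Rightarrow> 'a::euclidean_space set \<Rightarrow> ('a \<Rightarrow> real) \<Rightarrow> bool" where
  "C2alpha_boundary \<alpha> \<Omega> f = (\<exists>F. Ck 2 UNIV F \<and>
      (\<exists>M. \<forall>i\<in>Basis. \<forall>j\<in>Basis. \<forall>x y.
          \<bar>pderiv (pderiv F i) j x - pderiv (pderiv F i) j y\<bar> \<le> M * norm (x - y) powr \<alpha>) \<and>
      (\<forall>x\<in>frontier \<Omega>. F x = f x))"

definition test_fun :: "'a::euclidean_space set \<Rightarrow> ('a \<Rightarrow> real) \<Rightarrow> bool" where
  "test_fun \<Omega> \<phi> = (Cinf UNIV \<phi> \<and> compact (closure {x. \<phi> x \<noteq> 0}) \<and> closure {x. \<phi> x \<noteq> 0} \<subseteq> \<Omega>)"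

definition weak_grad :: "'a::euclidean_space set \<Rightarrow> ('a \<Rightarrow> real) \<Rightarrow> ('a \<Rightarrow> 'a) \<Rightarrow> bool" where
  "weak_grad \<Omega> h g = (\<forall>\<phi>. test_fun \<Omega> \<phi> \<longrightarrow> (\<forall>i\<in>Basis.
      (LINT x:\<Omega>|lborel. h x * pderiv \<phi> i x) = - (LINT x:\<Omega>|lborel. (g x \<bullet> i) * \<phi> x)))"

definition L2sq :: "'a::euclidean_space set \<Rightarrow> ('a \<Rightarrow> real) \<Rightarrow> ennreal" where
  "L2sq \<Omega> h = (\<integral>\<^sup>+ x\<in>\<Omega>. ennreal ((h x)\<^sup>2) \<partial>lborel)"

definition H1 :: "'a::euclidean_space set \<Rightarrow> ('a \<Rightarrow> real) \<Rightarrow> ('a \<Rightarrow> 'a) \<Rightarrow> bool" where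
  "H1 \<Omega> h g = (h \<in> borel_measurable lborel \<and> g \<in> borel_measurable lborel \<and>
      L2sq \<Omega> h < \<infinity> \<and> L2sq \<Omega> (\<lambda>x. norm (g x)) < \<infinity> \<and> weak_grad \<Omega> h g)"

(* h \<in> H^1(\<Omega>) with vanishing boundary trace, i.e. h \<in> H^1_0(\<Omega>) = H^1-closure of C_c^\<infinity>(\<Omega>) *)
definition H1_0 :: "'a::euclidean_space set \<Rightarrow> ('a \<Rightarrow> real) \<Rightarrow> ('a \<Rightarrow> 'a) \<Rightarrow> bool" where
  "H1_0 \<Omega> h g = (H1 \<Omega> h g \<and> (\<exists>\<phi>::nat \<Rightarrow> 'a \<Rightarrow> real. (\<forall>k. test_fun \<Omega> (\<phi> k)) \<and>
      ((\<lambda>k. L2sq \<Omega> (\<lambda>x. \<phi> k x - h x) + L2sq \<Omega> (\<lambda>x. norm (grad (\<phi> k) x - g x)))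
         \<longlonglongrightarrow> 0)))"

end

theory Submission
  imports Defs
begin

text \<open>
  For a test function \<open>\<phi>\<close>, integrating the divergence of the compactly supported field
  \<open>\<phi>\<^sup>2 exp u\<^sub>0 \<sigma>\<^sub>0 \<nabla>u\<^sub>0\<close> and using \<open>div (\<sigma>\<^sub>0 \<nabla>u\<^sub>0) = 0\<close> gives
  \<open>\<integral> 2 \<phi> exp u\<^sub>0 \<sigma>\<^sub>0 (\<nabla>u\<^sub>0 \<bullet> \<nabla>\<phi>) + \<phi>\<^sup>2 exp u\<^sub>0 \<sigma>\<^sub>0 |\<nabla>u\<^sub>0|\<^sup>2 = 0\<close>.
  The weight \<open>exp u\<^sub>0\<close> is chosen so that differentiating it produces the second term, which is
  bounded below by a positive multiple of \<open>\<phi>\<^sup>2\<close>: \<open>\<sigma>\<^sub>0\<close>, \<open>u\<^sub>0\<close> and \<open>|\<nabla>u\<^sub>0|\<close> are continuous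
  and \<open>\<sigma>\<^sub>0\<close>, \<open>|\<nabla>u\<^sub>0|\<close> positive on the compact closure of \<open>\<Omega>\<close>. Absorbing the cross term
  by Young's inequality gives \<open>\<parallel>\<phi>\<parallel>\<^sup>2 \<le> C \<parallel>\<nabla>u\<^sub>0 \<bullet> \<nabla>\<phi>\<parallel>\<^sup>2\<close>, and as \<open>\<nabla>u\<^sub>0\<close> is bounded the
  estimate passes to the \<open>H\<^sup>1\<close>-closure of the test functions.
\<close>

lemma pderiv_eq_derivative: "(f has_derivative D) (at x) \<Longrightarrow> pderiv f i x = D i"
  unfolding pderiv_def by (metis frechet_derivative_at)

lemma differentiable_at_cong_open:
  assumes "open S" "x \<in> S" "\<And>y. y \<in> S \<Longrightarrow> f y = g y" "f differentiable at x"
  shows "g differentiable at x"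
  using assms has_derivative_transform_within_open unfolding differentiable_def by blast

lemma pderiv_cong_open:
  assumes "open S" "x \<in> S" "\<And>y. y \<in> S \<Longrightarrow> f y = g y"
  shows "pderiv f i x = pderiv g i x"
proof -
  have "(f has_derivative D) (at x) \<longleftrightarrow> (g has_derivative D) (at x)" for D
    using assms has_derivative_transform_within_open[of f D x UNIV S g]
      has_derivative_transform_within_open[of g D x UNIV S f] by auto
  then show ?thesis unfolding pderiv_def frechet_derivative_def by simp
qed

lemma pderiv_eq_0_open:
  assumes "open S" "x \<in> S" "\<And>y. y \<in> S \<Longrightarrow> f y = 0"
  shows "pderiv f i x = 0"
  using pderiv_cong_open[OF assms(1,2), of f "\<lambda>_. 0"] assms(3) by (simp add: pderiv_def)

lemma pderiv_mult:
  assumes "f differentiable at x" "g differentiable at x"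
  shows "pderiv (\<lambda>y. f y * g y) i x = f x * pderiv g i x + pderiv f i x * g x"
  using pderiv_eq_derivative[OF has_derivative_mult[OF assms[unfolded frechet_derivative_works]]]
  by (simp add: pderiv_def)

lemma pderiv_exp:
  assumes "f differentiable at x"
  shows "pderiv (\<lambda>y. exp (f y)) i x = exp (f x) * pderiv f i x"
  using pderiv_eq_derivative[OF DERIV_compose_FDERIV[OF DERIV_exp assms[unfolded frechet_derivative_works]]]
  by (simp add: pderiv_def)

lemma differentiable_at_exp:
  fixes f :: "'a::real_normed_vector \<Rightarrow> real"
  assumes "f differentiable at x"
  shows "(\<lambda>y. exp (f y)) differentiable at x"
proof -
  obtain D where "(f has_derivative D) (at x)"
    using assms unfolding differentiable_def by blast
  from DERIV_compose_FDERIV[OF DERIV_exp this] show ?thesis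
    unfolding differentiable_def by blast
qed

lemma grad_inner_Basis: "i \<in> Basis \<Longrightarrow> grad f x \<bullet> i = pderiv f i x"
  by (simp add: grad_def inner_sum_left inner_Basis if_distrib cong: if_cong)

lemma inner_grad_eq_sum: "grad f x \<bullet> v = (\<Sum>i\<in>Basis. pderiv f i x * (v \<bullet> i))"
  by (simp add: euclidean_inner[of _ v] grad_inner_Basis)

lemma grad_mult:
  assumes "f differentiable at x" "g differentiable at x"
  shows "grad (\<lambda>y. f y * g y) x = f x *\<^sub>R grad g x + g x *\<^sub>R grad f x"
  by (rule euclidean_eqI) (simp add: grad_inner_Basis pderiv_mult[OF assms] algebra_simps)

lemma grad_exp:
  assumes "f differentiable at x"
  shows "grad (\<lambda>y. exp (f y)) x = exp (f x) *\<^sub>R grad f x"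
  by (rule euclidean_eqI) (simp add: grad_inner_Basis pderiv_exp[OF assms])

lemma divergence_scaleR:
  assumes "w differentiable at x" "\<And>i. i \<in> Basis \<Longrightarrow> (\<lambda>y. V y \<bullet> i) differentiable at x"
  shows "divergence (\<lambda>y. w y *\<^sub>R V y) x = grad w x \<bullet> V x + w x * divergence V x"
  using assms
  by (simp add: divergence_def inner_grad_eq_sum pderiv_mult sum_distrib_left sum.distrib algebra_simps
      cong: sum.cong)

lemma Ck_cong_open:
  assumes "open S" "\<And>x. x \<in> S \<Longrightarrow> f x = g x"
  shows "Ck k S f \<longleftrightarrow> Ck k S g"
  using assms
proof (induction k arbitrary: f g)
  case 0
  then show ?case using continuous_on_cong by auto
next
  case (Suc k)
  have "pderiv f i x = pderiv g i x" if "x \<in> S" for i x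
    using pderiv_cong_open[OF Suc.prems(1) that] Suc.prems(2) by blast
  then have "Ck k S (pderiv f i) \<longleftrightarrow> Ck k S (pderiv g i)" for i
    using Suc.IH[OF Suc.prems(1)] by blast
  moreover have "f differentiable_on S \<longleftrightarrow> g differentiable_on S"
    using Suc.prems differentiable_at_cong_open[OF Suc.prems(1)]
    by (metis differentiable_on_eq_differentiable_at)
  ultimately show ?case using Suc.prems(2) continuous_on_cong by auto
qed

lemma Ck_subset: "Ck k S f \<Longrightarrow> T \<subseteq> S \<Longrightarrow> Ck k T f"
  by (induction k arbitrary: f) (auto intro: continuous_on_subset differentiable_on_subset)

lemma Ck_Suc_imp_Ck: "Ck (Suc k) S f \<Longrightarrow> Ck k S f"
  by (induction k arbitrary: f) auto

lemma Ck1_differentiable_at: "Ck 1 S f \<Longrightarrow> open S \<Longrightarrow> x \<in> S \<Longrightarrow> f differentiable at x"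
  by (auto simp: differentiable_on_eq_differentiable_at)

lemma Ck2_imp_Ck1_pderiv: "Ck 2 S f \<Longrightarrow> i \<in> Basis \<Longrightarrow> Ck 1 S (pderiv f i)"
  by (simp add: numeral_2_eq_2)

lemma Ck1_mult:
  assumes "open S" "Ck 1 S f" "Ck 1 S g"
  shows "Ck 1 S (\<lambda>x. f x * g x)"
proof -
  have d: "f differentiable at x" "g differentiable at x" if "x \<in> S" for x
    using assms that by (auto simp: differentiable_on_eq_differentiable_at)
  have "continuous_on S (\<lambda>x. f x * pderiv g i x + pderiv f i x * g x)" if "i \<in> Basis" for i
    using assms that by (auto intro!: continuous_intros)
  then have "continuous_on S (pderiv (\<lambda>x. f x * g x) i)" if "i \<in> Basis" for i
    by (rule continuous_on_eq) (auto simp: pderiv_mult d that)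
  with assms d show ?thesis
    by (auto simp: differentiable_on_eq_differentiable_at intro!: continuous_intros)
qed

lemma Ck1_exp:
  assumes "open S" "Ck 1 S f"
  shows "Ck 1 S (\<lambda>x. exp (f x))"
proof -
  have d: "f differentiable at x" if "x \<in> S" for x
    using assms that by (auto simp: differentiable_on_eq_differentiable_at)
  have "continuous_on S (\<lambda>x. exp (f x) * pderiv f i x)" if "i \<in> Basis" for i
    using assms that by (auto intro!: continuous_intros)
  then have "continuous_on S (pderiv (\<lambda>x. exp (f x)) i)" if "i \<in> Basis" for i
    by (rule continuous_on_eq) (auto simp: pderiv_exp d that)
  with assms d show ?thesis
    by (auto simp: differentiable_on_eq_differentiable_at differentiable_at_exp intro!: continuous_intros)
qed

lemma Ck1_open_Un:
  assumes "open S" "open T" "Ck 1 S f" "Ck 1 T f"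
  shows "Ck 1 (S \<union> T) f"
  using assms by (auto simp: differentiable_on_eq_differentiable_at open_Un intro: continuous_on_open_Un)

lemma Ck_const: "Ck k (S :: 'a::euclidean_space set) (\<lambda>_. c)"
proof (induction k arbitrary: c)
  case (Suc k)
  have "pderiv (\<lambda>_::'a. c) i = (\<lambda>_. 0)" for i
    using pderiv_eq_derivative[OF has_derivative_const] by auto
  then show ?case
    using Suc.IH[of 0] by simp
qed simp

lemma Ck1_continuous_on_grad: "Ck 1 S f \<Longrightarrow> continuous_on S (grad f)"
  unfolding grad_def by (intro continuous_on_sum continuous_on_scaleR continuous_on_const) auto

lemma continuous_on_compact_support_UNIV:
  fixes f :: "'a::metric_space \<Rightarrow> 'b::real_normed_vector"
  assumes "open \<Omega>" "compact K" "K \<subseteq> \<Omega>" "continuous_on \<Omega> f" "\<And>x. x \<notin> K \<Longrightarrow> f x = 0"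
  shows "continuous_on UNIV f"
proof -
  have oK: "open (- K)"
    using assms(2) by (simp add: compact_imp_closed open_Compl)
  have "continuous_on (- K) f"
    using assms(5) continuous_on_const[of "- K" 0] by (metis ComplD continuous_on_eq)
  moreover have "\<Omega> \<union> - K = UNIV"
    using assms(3) by blast
  ultimately show ?thesis
    using continuous_on_open_Un[OF assms(1) oK assms(4)] by metis
qed

lemma Ck1_compact_support_UNIV:
  assumes "open \<Omega>" "compact K" "K \<subseteq> \<Omega>" "Ck 1 \<Omega> f" "\<And>x. x \<notin> K \<Longrightarrow> f x = 0"
  shows "Ck 1 UNIV f"
proof -
  have oK: "open (- K)"
    using assms(2) by (simp add: compact_imp_closed open_Compl)
  have "0 = f x" if "x \<in> - K" for x
    using assms(5) that by simp
  then have "Ck 1 (- K) f"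
    using Ck_cong_open[OF oK, of "\<lambda>_. 0" f] Ck_const by blast
  moreover have "\<Omega> \<union> - K = UNIV"
    using assms(3) by blast
  ultimately show ?thesis
    using Ck1_open_Un[OF assms(1) oK assms(4)] by metis
qed

section \<open>Integrals of derivatives of compactly supported functions\<close>

lemma has_real_derivative_along_line:
  assumes "f differentiable at (x + s *\<^sub>R v)"
  shows "((\<lambda>t. f (x + t *\<^sub>R v)) has_real_derivative pderiv f v (x + s *\<^sub>R v)) (at s)"
proof -
  have "((\<lambda>t. x + t *\<^sub>R v) has_derivative (\<lambda>t. t *\<^sub>R v)) (at s)"
    by (auto intro!: derivative_eq_intros)
  from has_derivative_compose[OF this assms[unfolded frechet_derivative_works]]
  show ?thesis
    by (simp add: o_def has_field_derivative_def pderiv_def linear_cmul[OF linear_frechet_derivative[OF assms]]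
        mult_commute_abs)
qed

lemma integrable_continuous_compact_support:
  fixes f :: "'a::euclidean_space \<Rightarrow> real"
  assumes "continuous_on UNIV f" "compact K" "\<And>x. x \<notin> K \<Longrightarrow> f x = 0"
  shows "integrable lborel f"
proof -
  have "integrable lborel (\<lambda>x. indicator K x *\<^sub>R f x)"
    using borel_integrable_compact[OF assms(2) continuous_on_subset[OF assms(1)]] by simp
  moreover have "(\<lambda>x. indicator K x *\<^sub>R f x) = f"
    using assms(3) by (auto simp: fun_eq_iff indicator_def)
  ultimately show ?thesis by simp
qed

lemma bounded_continuous_compact_support:
  fixes f :: "'a::metric_space \<Rightarrow> real"
  assumes "continuous_on UNIV f" "compact K" "\<And>x. x \<notin> K \<Longrightarrow> f x = 0"
  obtains B where "\<And>x. \<bar>f x\<bar> \<le> B"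
proof -
  have "bounded (f ` K)"
    using compact_continuous_image[OF continuous_on_subset[OF assms(1)] assms(2)]
    by (simp add: compact_imp_bounded)
  then obtain B where "\<forall>x\<in>K. \<bar>f x\<bar> \<le> B"
    unfolding bounded_iff by auto
  then have "\<bar>f x\<bar> \<le> max B 0" for x
    using assms(3) by (cases "x \<in> K") auto
  then show ?thesis
    using that by blast
qed

lemma lborel_integral_translate:
  fixes f :: "'a::euclidean_space \<Rightarrow> real"
  assumes "integrable lborel f" "f \<in> borel_measurable borel"
  shows "integrable lborel (\<lambda>x. f (x + c))" "(\<integral>x. f (x + c) \<partial>lborel) = integral\<^sup>L lborel f"
proof -
  have m: "(+) c \<in> measurable lborel borel" by simp
  show "integrable lborel (\<lambda>x. f (x + c))"
    using assms integrable_distr_eq[OF m assms(2)] by (simp add: lborel_distr_plus add.commute)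
  show "(\<integral>x. f (x + c) \<partial>lborel) = integral\<^sup>L lborel f"
    using integral_distr[OF m assms(2)] by (simp add: lborel_distr_plus add.commute)
qed

lemma difference_quotient_bound:
  fixes f :: "'a::euclidean_space \<Rightarrow> real"
  assumes diff: "\<And>x. f differentiable at x" and Bd: "\<And>x. \<bar>pderiv f v x\<bar> \<le> Bd"
    and R: "K \<subseteq> cball 0 R" and zero: "\<And>x. x \<notin> K \<Longrightarrow> f x = 0"
    and t: "0 < t" "t \<le> 1"
  shows "\<bar>(f (x + t *\<^sub>R v) - f x) / t\<bar> \<le> Bd * indicator (cball 0 (R + norm v)) x"
proof (cases "x \<in> cball 0 (R + norm v)")
  case True
  obtain z where "f (x + t *\<^sub>R v) - f (x + 0 *\<^sub>R v) = (t - 0) * pderiv f v (x + z *\<^sub>R v)"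
    using MVT2[of 0 t "\<lambda>h. f (x + h *\<^sub>R v)" "\<lambda>h. pderiv f v (x + h *\<^sub>R v)"]
      t(1) has_real_derivative_along_line diff by blast
  then show ?thesis
    using True Bd t(1) by simp
next
  case False
  then have far: "R < norm x - norm v"
    by (simp add: mem_cball_0)
  have "norm x - norm v \<le> norm x - t * norm v"
    using t mult_left_le_one_le[of "norm v" t] by simp
  also have "\<dots> \<le> norm (x + t *\<^sub>R v)"
    using norm_triangle_ineq4[of "x + t *\<^sub>R v" "t *\<^sub>R v"] t(1) by simp
  finally have "R < norm (x + t *\<^sub>R v)"
    using far by linarith
  moreover have "R < norm x"
    using far norm_ge_zero[of v] by linarith
  ultimately have "x \<notin> K" "x + t *\<^sub>R v \<notin> K"
    using R by (auto simp: subset_iff mem_cball_0 not_le[symmetric])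
  then show ?thesis
    using zero False by simp
qed

text \<open>The difference quotients in direction \<open>v\<close> integrate to zero by translation invariance of
  Lebesgue measure, and converge dominatedly to \<open>pderiv f v\<close>.\<close>

lemma integral_pderiv_eq_0:
  fixes f :: "'a::euclidean_space \<Rightarrow> real"
  assumes diff: "\<And>x. f differentiable at x"
    and cont: "continuous_on UNIV (pderiv f v)"
    and K: "compact K" and zero: "\<And>x. x \<notin> K \<Longrightarrow> f x = 0"
  shows "integral\<^sup>L lborel (pderiv f v) = 0"
proof -
  have fcont: "continuous_on UNIV f"
    using diff by (simp add: differentiable_imp_continuous_within continuous_at_imp_continuous_on)
  have fmeas: "f \<in> borel_measurable borel"
    by (rule borel_measurable_continuous_onI[OF fcont])
  have fint: "integrable lborel f"
    by (rule integrable_continuous_compact_support[OF fcont K zero])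
  have "pderiv f v x = 0" if "x \<notin> K" for x
    using K that zero by (intro pderiv_eq_0_open[of "- K"]) (auto simp: compact_imp_closed open_Compl)
  then obtain Bd where Bd: "\<And>x. \<bar>pderiv f v x\<bar> \<le> Bd"
    using bounded_continuous_compact_support[OF cont K] by blast
  obtain R where R: "K \<subseteq> cball 0 R"
    using bounded_subset_ballD[OF compact_imp_bounded[OF K]] ball_subset_cball by blast
  define t :: "nat \<Rightarrow> real" where "t k = 1 / real (Suc k)" for k
  have t_pos: "0 < t k" "t k \<le> 1" for k
    by (auto simp: t_def field_simps)
  have t_at_0: "filterlim t (at 0) sequentially"
    using LIMSEQ_inverse_real_of_nat t_pos(1) unfolding t_def
    by (auto simp: filterlim_at inverse_eq_divide intro!: always_eventually)
  define s where "s k x = (f (x + t k *\<^sub>R v) - f x) / t k" for k x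
  have s_integral: "integral\<^sup>L lborel (s k) = 0" for k
    unfolding s_def using lborel_integral_translate[OF fint fmeas, of "t k *\<^sub>R v"] fint by simp
  have s_lim: "(\<lambda>k. s k x) \<longlonglongrightarrow> pderiv f v x" for x
  proof -
    have "((\<lambda>h. f (x + h *\<^sub>R v)) has_real_derivative pderiv f v x) (at 0)"
      using has_real_derivative_along_line[of f x 0 v] diff by simp
    then have "((\<lambda>h. (f (x + h *\<^sub>R v) - f x) / h) \<longlongrightarrow> pderiv f v x) (at 0)"
      by (simp add: has_field_derivative_iff)
    from filterlim_compose[OF this t_at_0] show ?thesis by (simp add: s_def)
  qed
  have dom: "integrable lborel (\<lambda>x. Bd * indicator (cball (0::'a) (R + norm v)) x)"
    by (intro integrable_mult_right integrable_real_indicator emeasure_bounded_finite) auto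
  have s_meas: "s k \<in> borel_measurable lborel" for k
    unfolding s_def using fmeas by measurable
  have "pderiv f v \<in> borel_measurable lborel"
    using borel_measurable_continuous_onI[OF cont] by simp
  from integral_dominated_convergence[OF this s_meas dom]
  have "(\<lambda>k. integral\<^sup>L lborel (s k)) \<longlonglongrightarrow> integral\<^sup>L lborel (pderiv f v)"
    using s_lim difference_quotient_bound[OF diff Bd R zero t_pos] by (simp add: s_def always_eventually)
  then show ?thesis
    using LIMSEQ_unique[OF _ tendsto_const] by (simp add: s_integral)
qed

lemma integral_divergence_eq_0:
  fixes V :: "'a::euclidean_space \<Rightarrow> 'a"
  assumes C1: "\<And>i. i \<in> Basis \<Longrightarrow> Ck 1 UNIV (\<lambda>x. V x \<bullet> i)"
    and K: "compact K" and zero: "\<And>x. x \<notin> K \<Longrightarrow> V x = 0"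
  shows "integrable lborel (divergence V)" "integral\<^sup>L lborel (divergence V) = 0"
proof -
  have oK: "open (- K)"
    using K by (simp add: compact_imp_closed open_Compl)
  have cont: "continuous_on UNIV (pderiv (\<lambda>x. V x \<bullet> i) i)" if "i \<in> Basis" for i
    using C1[OF that] that by simp
  have diff: "(\<lambda>x. V x \<bullet> i) differentiable at x" if "i \<in> Basis" for i x
    using C1[OF that] by (simp add: differentiable_on_eq_differentiable_at)
  have pderiv_0: "pderiv (\<lambda>x. V x \<bullet> i) i x = 0" if "x \<notin> K" for i x
    using pderiv_eq_0_open[OF oK, of x "\<lambda>x. V x \<bullet> i"] zero that by simp
  have "integrable lborel (pderiv (\<lambda>x. V x \<bullet> i) i)" if "i \<in> Basis" for i
    using integrable_continuous_compact_support[OF cont[OF that] K pderiv_0] .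
  moreover have "integral\<^sup>L lborel (pderiv (\<lambda>x. V x \<bullet> i) i) = 0" if "i \<in> Basis" for i
    using integral_pderiv_eq_0[OF diff[OF that] cont[OF that] K] zero that by simp
  ultimately show "integrable lborel (divergence V)" "integral\<^sup>L lborel (divergence V) = 0"
    unfolding divergence_def by (simp_all add: integral_sum)
qed

section \<open>The weighted identity for test functions\<close>

lemma test_funE:
  assumes "test_fun \<Omega> \<phi>"
  obtains K where "compact K" "K \<subseteq> \<Omega>" "Ck 1 UNIV \<phi>"
    "\<And>x. x \<notin> K \<Longrightarrow> \<phi> x = 0" "\<And>x. x \<notin> K \<Longrightarrow> grad \<phi> x = 0"
proof
  let ?K = "closure {x. \<phi> x \<noteq> 0}"
  show "compact ?K" "?K \<subseteq> \<Omega>" "Ck 1 UNIV \<phi>"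
    using assms unfolding test_fun_def Cinf_def by auto
  show zero: "\<phi> x = 0" if "x \<notin> ?K" for x
    using that closure_subset[of "{x. \<phi> x \<noteq> 0}"] by auto
  have "open (- ?K)"
    using closed_closure open_Compl by blast
  from pderiv_eq_0_open[OF this] have "pderiv \<phi> i x = 0" if "x \<notin> ?K" for i x
    using zero that by blast
  then show "grad \<phi> x = 0" if "x \<notin> ?K" for x
    using that by (simp add: grad_def)
qed

lemma divergence_weighted_flux:
  fixes \<phi> u \<sigma> :: "'a::euclidean_space \<Rightarrow> real"
  assumes d: "\<phi> differentiable at x" "u differentiable at x" "\<sigma> differentiable at x"
    and du: "\<And>i. i \<in> Basis \<Longrightarrow> pderiv u i differentiable at x"
    and div0: "divergence (\<lambda>y. \<sigma> y *\<^sub>R grad u y) x = 0"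
  shows "divergence (\<lambda>y. (\<phi> y * \<phi> y * exp (u y)) *\<^sub>R (\<sigma> y *\<^sub>R grad u y)) x
           = 2 * \<phi> x * (exp (u x) * \<sigma> x) * (grad u x \<bullet> grad \<phi> x)
             + (\<phi> x)\<^sup>2 * (exp (u x) * \<sigma> x) * (norm (grad u x))\<^sup>2"
proof -
  have d\<phi>\<phi>: "(\<lambda>y. \<phi> y * \<phi> y) differentiable at x" and dexp: "(\<lambda>y. exp (u y)) differentiable at x"
    using d by (simp_all add: differentiable_at_exp)
  then have dw: "(\<lambda>y. \<phi> y * \<phi> y * exp (u y)) differentiable at x"
    by simp
  have dV: "(\<lambda>y. (\<sigma> y *\<^sub>R grad u y) \<bullet> i) differentiable at x" if "i \<in> Basis" for i
    using d(3) du[OF that] that by (simp add: grad_inner_Basis)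
  have "divergence (\<lambda>y. (\<phi> y * \<phi> y * exp (u y)) *\<^sub>R (\<sigma> y *\<^sub>R grad u y)) x
      = grad (\<lambda>y. \<phi> y * \<phi> y * exp (u y)) x \<bullet> (\<sigma> x *\<^sub>R grad u x)"
    by (simp only: divergence_scaleR[OF dw dV] div0 mult_zero_right add_0_right)
  also have "grad (\<lambda>y. \<phi> y * \<phi> y * exp (u y)) x
      = (\<phi> x * \<phi> x) *\<^sub>R (exp (u x) *\<^sub>R grad u x) + exp (u x) *\<^sub>R (\<phi> x *\<^sub>R grad \<phi> x + \<phi> x *\<^sub>R grad \<phi> x)"
    using d d\<phi>\<phi> dexp by (simp add: grad_mult grad_exp)
  finally show ?thesis
    unfolding power2_norm_eq_inner by (simp add: power2_eq_square inner_commute algebra_simps)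
qed

lemma integral_weighted_identity:
  fixes \<Omega> :: "'a::euclidean_space set" and \<sigma> u \<phi> :: "'a \<Rightarrow> real"
  assumes \<Omega>: "open \<Omega>" and \<sigma>: "Ck 1 \<Omega> \<sigma>" and u: "Ck 2 \<Omega> u"
    and div0: "\<forall>x\<in>\<Omega>. divergence (\<lambda>y. \<sigma> y *\<^sub>R grad u y) x = 0"
    and \<phi>: "test_fun \<Omega> \<phi>"
  defines "D \<equiv> \<lambda>x. 2 * \<phi> x * (exp (u x) * \<sigma> x) * (grad u x \<bullet> grad \<phi> x)
                   + (\<phi> x)\<^sup>2 * (exp (u x) * \<sigma> x) * (norm (grad u x))\<^sup>2"
  shows "integrable lborel D" "integral\<^sup>L lborel D = 0"
proof -
  obtain K where K: "compact K" "K \<subseteq> \<Omega>" and \<phi>1: "Ck 1 UNIV \<phi>"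
    and \<phi>0: "\<And>x. x \<notin> K \<Longrightarrow> \<phi> x = 0" and grad_\<phi>0: "\<And>x. x \<notin> K \<Longrightarrow> grad \<phi> x = 0"
    using test_funE[OF \<phi>] by blast
  define V where "V = (\<lambda>y. (\<phi> y * \<phi> y * exp (u y)) *\<^sub>R (\<sigma> y *\<^sub>R grad u y))"
  have u1: "Ck 1 \<Omega> u"
    using Ck_Suc_imp_Ck[of 1] u by (simp add: numeral_2_eq_2)
  have \<phi>1': "Ck 1 \<Omega> \<phi>"
    using Ck_subset[OF \<phi>1] by blast
  have V0: "V x = 0" if "x \<notin> K" for x
    using \<phi>0[OF that] by (simp add: V_def)
  have "Ck 1 UNIV (\<lambda>y. V y \<bullet> i)" if i: "i \<in> Basis" for i
  proof (rule Ck1_compact_support_UNIV[OF \<Omega> K])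
    have V_i: "(\<lambda>y. V y \<bullet> i) = (\<lambda>y. (\<phi> y * \<phi> y * exp (u y)) * (\<sigma> y * pderiv u i y))"
      using i by (simp add: fun_eq_iff V_def grad_inner_Basis)
    have "Ck 1 \<Omega> (\<lambda>y. \<phi> y * \<phi> y * exp (u y))"
      using Ck1_mult[OF \<Omega> Ck1_mult[OF \<Omega> \<phi>1' \<phi>1'] Ck1_exp[OF \<Omega> u1]] .
    from Ck1_mult[OF \<Omega> this Ck1_mult[OF \<Omega> \<sigma> Ck2_imp_Ck1_pderiv[OF u i]]]
    show "Ck 1 \<Omega> (\<lambda>y. V y \<bullet> i)"
      unfolding V_i .
  qed (simp add: V0)
  note div = integral_divergence_eq_0[OF this K(1) V0]
  have "divergence V x = D x" for x
  proof (cases "x \<in> \<Omega>")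
    case True
    have "pderiv u i differentiable at x" if "i \<in> Basis" for i
      using Ck1_differentiable_at[OF Ck2_imp_Ck1_pderiv[OF u that] \<Omega> True] .
    with True show ?thesis
      unfolding V_def D_def using div0
      by (intro divergence_weighted_flux Ck1_differentiable_at[OF \<phi>1' \<Omega> True]
          Ck1_differentiable_at[OF u1 \<Omega> True] Ck1_differentiable_at[OF \<sigma> \<Omega> True]) auto
  next
    case False
    then have "x \<in> - K" "open (- K)"
      using K by (auto simp: compact_imp_closed open_Compl)
    then show ?thesis
      using pderiv_eq_0_open[of "- K" x "\<lambda>y. V y \<bullet> _"] V0 \<phi>0 grad_\<phi>0
      by (simp add: D_def divergence_def)
  qed
  then have "divergence V = D" ..
  with div show "integrable lborel D" "integral\<^sup>L lborel D = 0"
    by simp_all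
qed

section \<open>The estimate for test functions\<close>

lemma square_add_le: "(x + y)\<^sup>2 \<le> 2 * x\<^sup>2 + 2 * (y::real)\<^sup>2"
proof -
  have "0 \<le> (x - y)\<^sup>2" by simp
  then show ?thesis by (simp add: power2_eq_square algebra_simps)
qed

text \<open>The pointwise absorption step: the bracket is the integrand of the weighted identity, and
  the inequality follows from \<open>\<kappa>p\<^sup>2 \<le> anp\<^sup>2\<close> and \<open>(\<kappa>p + 2aq)\<^sup>2 \<ge> 0\<close>.\<close>

lemma square_le_weighted_identity:
  fixes p q a n \<kappa> M :: real
  assumes \<kappa>: "\<kappa> > 0" and a: "0 \<le> a" "a \<le> M" and an: "\<kappa> \<le> a * n"
  shows "p\<^sup>2 \<le> (2 / \<kappa>) * (2 * p * a * q + p\<^sup>2 * a * n) + (4 * M\<^sup>2 / \<kappa>\<^sup>2) * q\<^sup>2"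
proof -
  have "\<kappa> * (\<kappa> * p\<^sup>2) \<le> \<kappa> * (a * n * p\<^sup>2)"
    using an \<kappa> by (intro mult_left_mono mult_right_mono) auto
  moreover have "0 \<le> (\<kappa> * p + 2 * a * q)\<^sup>2"
    by simp
  moreover have "a\<^sup>2 * q\<^sup>2 \<le> M\<^sup>2 * q\<^sup>2"
    using a by (intro mult_right_mono power_mono) auto
  ultimately have "\<kappa>\<^sup>2 * p\<^sup>2 \<le> 2 * \<kappa> * (2 * p * a * q + p\<^sup>2 * a * n) + 4 * M\<^sup>2 * q\<^sup>2"
    by (simp add: power2_eq_square algebra_simps)
  then show ?thesis
    using \<kappa> by (simp add: field_simps power2_eq_square)
qed

lemma L2sq_eq_integral:
  assumes "integrable lborel (\<lambda>x. (f x)\<^sup>2)" "\<And>x. x \<notin> \<Omega> \<Longrightarrow> f x = 0"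
  shows "L2sq \<Omega> f = ennreal (\<integral>x. (f x)\<^sup>2 \<partial>lborel)"
proof -
  have "L2sq \<Omega> f = (\<integral>\<^sup>+x. ennreal ((f x)\<^sup>2) \<partial>lborel)"
    unfolding L2sq_def using assms(2) by (intro nn_integral_cong) (auto simp: indicator_def)
  also have "\<dots> = ennreal (\<integral>x. (f x)\<^sup>2 \<partial>lborel)"
    using assms(1) by (intro nn_integral_eq_integral) auto
  finally show ?thesis .
qed

lemma L2sq_le_combination:
  fixes \<Omega> :: "'a::euclidean_space set"
  assumes "0 \<le> \<alpha>" "0 \<le> \<beta>"
    and "(\<lambda>x. indicator \<Omega> x * a x) \<in> borel_measurable lborel"
    and "(\<lambda>x. indicator \<Omega> x * b x) \<in> borel_measurable lborel"
    and le: "\<And>x. x \<in> \<Omega> \<Longrightarrow> (c x)\<^sup>2 \<le> \<alpha> * (a x)\<^sup>2 + \<beta> * (b x)\<^sup>2"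
  shows "L2sq \<Omega> c \<le> ennreal \<alpha> * L2sq \<Omega> a + ennreal \<beta> * L2sq \<Omega> b"
proof -
  have L2sq_indicator: "L2sq \<Omega> f = (\<integral>\<^sup>+x. ennreal ((indicator \<Omega> x * f x)\<^sup>2) \<partial>lborel)" for f
    unfolding L2sq_def by (intro nn_integral_cong) (simp add: indicator_def)
  have "ennreal ((indicator \<Omega> x * c x)\<^sup>2)
          \<le> ennreal \<alpha> * ennreal ((indicator \<Omega> x * a x)\<^sup>2) + ennreal \<beta> * ennreal ((indicator \<Omega> x * b x)\<^sup>2)"
    for x
  proof (cases "x \<in> \<Omega>")
    case True
    have "ennreal ((c x)\<^sup>2) \<le> ennreal (\<alpha> * (a x)\<^sup>2 + \<beta> * (b x)\<^sup>2)"
      using le[OF True] by (rule ennreal_leI)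
    also have "\<dots> = ennreal \<alpha> * ennreal ((a x)\<^sup>2) + ennreal \<beta> * ennreal ((b x)\<^sup>2)"
      using assms(1,2) by (simp add: ennreal_plus ennreal_mult)
    finally show ?thesis
      using True by simp
  qed simp
  then have "L2sq \<Omega> c \<le> (\<integral>\<^sup>+x. ennreal \<alpha> * ennreal ((indicator \<Omega> x * a x)\<^sup>2)
                              + ennreal \<beta> * ennreal ((indicator \<Omega> x * b x)\<^sup>2) \<partial>lborel)"
    unfolding L2sq_indicator[of c] by (rule nn_integral_mono)
  also have "\<dots> = ennreal \<alpha> * L2sq \<Omega> a + ennreal \<beta> * L2sq \<Omega> b"
    using assms(3,4) by (simp add: nn_integral_add nn_integral_cmult L2sq_indicator)
  finally show ?thesis .
qed

lemma L2sq_le_of_integral_eq_0: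
  assumes f: "integrable lborel (\<lambda>x. (f x)\<^sup>2)" "\<And>x. x \<notin> \<Omega> \<Longrightarrow> f x = 0"
    and q: "integrable lborel (\<lambda>x. (q x)\<^sup>2)" "\<And>x. x \<notin> \<Omega> \<Longrightarrow> q x = 0"
    and D: "integrable lborel D" "integral\<^sup>L lborel D = 0"
    and le: "\<And>x. (f x)\<^sup>2 \<le> k * D x + C * (q x)\<^sup>2" and C: "0 \<le> C"
  shows "L2sq \<Omega> f \<le> ennreal C * L2sq \<Omega> q"
proof -
  have "(\<integral>x. (f x)\<^sup>2 \<partial>lborel) \<le> (\<integral>x. k * D x + C * (q x)\<^sup>2 \<partial>lborel)"
    using le f(1) q(1) D(1) by (intro integral_mono) auto
  also have "\<dots> = C * (\<integral>x. (q x)\<^sup>2 \<partial>lborel)"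
    using q(1) D by simp
  finally have "ennreal (\<integral>x. (f x)\<^sup>2 \<partial>lborel) \<le> ennreal C * ennreal (\<integral>x. (q x)\<^sup>2 \<partial>lborel)"
    using C by (simp add: ennreal_leI ennreal_mult'[symmetric])
  then show ?thesis
    using L2sq_eq_integral[OF f] L2sq_eq_integral[OF q] by simp
qed

lemma test_fun_L2sq_le:
  fixes \<Omega> :: "'a::euclidean_space set" and \<sigma> u \<phi> :: "'a \<Rightarrow> real"
  assumes \<Omega>: "open \<Omega>" and \<sigma>: "Ck 1 \<Omega> \<sigma>" and u: "Ck 2 \<Omega> u"
    and div0: "\<forall>x\<in>\<Omega>. divergence (\<lambda>y. \<sigma> y *\<^sub>R grad u y) x = 0"
    and m: "0 < m" "\<forall>x\<in>\<Omega>. m \<le> exp (u x) * \<sigma> x" "\<forall>x\<in>\<Omega>. exp (u x) * \<sigma> x \<le> M"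
    and c: "0 < c" "\<forall>x\<in>\<Omega>. c \<le> norm (grad u x)"
    and \<phi>: "test_fun \<Omega> \<phi>"
  shows "L2sq \<Omega> \<phi> \<le> ennreal (4 * M\<^sup>2 / (m * c\<^sup>2)\<^sup>2) * L2sq \<Omega> (\<lambda>x. grad u x \<bullet> grad \<phi> x)"
proof -
  obtain K where K: "compact K" "K \<subseteq> \<Omega>" and \<phi>1: "Ck 1 UNIV \<phi>"
    and \<phi>0: "\<And>x. x \<notin> K \<Longrightarrow> \<phi> x = 0" and grad_\<phi>0: "\<And>x. x \<notin> K \<Longrightarrow> grad \<phi> x = 0"
    using test_funE[OF \<phi>] by blast
  define Q where "Q x = grad u x \<bullet> grad \<phi> x" for x
  have Q0: "Q x = 0" if "x \<notin> K" for x
    using grad_\<phi>0[OF that] by (simp add: Q_def)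
  have "continuous_on \<Omega> Q"
    unfolding Q_def using Ck1_continuous_on_grad[OF Ck_Suc_imp_Ck[of 1 \<Omega> u]] u
      continuous_on_subset[OF Ck1_continuous_on_grad[OF \<phi>1]]
    by (intro continuous_intros) (auto simp: numeral_2_eq_2)
  then have "continuous_on UNIV Q"
    using continuous_on_compact_support_UNIV[OF \<Omega> K] Q0 by blast
  then have Q2: "integrable lborel (\<lambda>x. (Q x)\<^sup>2)"
    using Q0 by (intro integrable_continuous_compact_support[OF _ K(1)]) (auto intro!: continuous_intros)
  have \<phi>2: "integrable lborel (\<lambda>x. (\<phi> x)\<^sup>2)"
    using \<phi>1 \<phi>0 by (intro integrable_continuous_compact_support[OF _ K(1)]) (auto intro!: continuous_intros)
  note D = integral_weighted_identity[OF \<Omega> \<sigma> u div0 \<phi>, folded Q_def]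
  show ?thesis
    unfolding Q_def[symmetric]
  proof (rule L2sq_le_of_integral_eq_0[OF \<phi>2 _ Q2 _ D])
    fix x
    show "(\<phi> x)\<^sup>2 \<le> 2 / (m * c\<^sup>2) * (2 * \<phi> x * (exp (u x) * \<sigma> x) * Q x
        + (\<phi> x)\<^sup>2 * (exp (u x) * \<sigma> x) * (norm (grad u x))\<^sup>2) + 4 * M\<^sup>2 / (m * c\<^sup>2)\<^sup>2 * (Q x)\<^sup>2"
    proof (cases "x \<in> \<Omega>")
      case True
      have a: "0 \<le> exp (u x) * \<sigma> x" "exp (u x) * \<sigma> x \<le> M"
        using m(1) m(2,3)[rule_format, OF True] by auto
      have "m * c\<^sup>2 \<le> exp (u x) * \<sigma> x * (norm (grad u x))\<^sup>2"
        using m(2)[rule_format, OF True] c(2)[rule_format, OF True] m(1) c(1)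
        by (intro mult_mono power_mono) auto
      moreover have "0 < m * c\<^sup>2"
        using m(1) c(1) by simp
      ultimately show ?thesis
        using square_le_weighted_identity a by blast
    next
      case False
      then have "x \<notin> K"
        using K(2) by blast
      then show ?thesis
        using \<phi>0 Q0 by simp
    qed
  qed (use K(2) \<phi>0 Q0 in auto)
qed

section \<open>Passing to \<open>H\<^sup>1\<^sub>0\<close>\<close>

lemma L2sq_inner_diff_le:
  fixes \<Omega> :: "'a::euclidean_space set" and b v w :: "'a \<Rightarrow> 'a"
  assumes b: "\<forall>x\<in>\<Omega>. norm (b x) \<le> B"
    and "(\<lambda>x. indicator \<Omega> x * (b x \<bullet> w x)) \<in> borel_measurable lborel"
    and "(\<lambda>x. indicator \<Omega> x * norm (v x - w x)) \<in> borel_measurable lborel"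
  shows "L2sq \<Omega> (\<lambda>x. b x \<bullet> v x)
           \<le> ennreal 2 * L2sq \<Omega> (\<lambda>x. b x \<bullet> w x) + ennreal (2 * B\<^sup>2) * L2sq \<Omega> (\<lambda>x. norm (v x - w x))"
proof (rule L2sq_le_combination)
  fix x assume x: "x \<in> \<Omega>"
  have "\<bar>b x \<bullet> (v x - w x)\<bar> \<le> norm (b x) * norm (v x - w x)"
    by (rule Cauchy_Schwarz_ineq2)
  also have "\<dots> \<le> B * norm (v x - w x)"
    using b x by (simp add: mult_right_mono)
  finally have "\<bar>b x \<bullet> (v x - w x)\<bar> \<le> B * norm (v x - w x)" .
  from power_mono[OF this abs_ge_zero, of 2]
  have "(b x \<bullet> (v x - w x))\<^sup>2 \<le> B\<^sup>2 * (norm (v x - w x))\<^sup>2"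
    by (simp add: power_mult_distrib)
  then show "(b x \<bullet> v x)\<^sup>2 \<le> 2 * (b x \<bullet> w x)\<^sup>2 + 2 * B\<^sup>2 * (norm (v x - w x))\<^sup>2"
    using square_add_le[of "b x \<bullet> w x" "b x \<bullet> (v x - w x)"] by (simp add: inner_diff_right)
qed (use assms in simp_all)

lemma ennreal_two_step_bound:
  fixes H P Q X M N :: ennreal and C B :: real
  assumes C: "0 \<le> C"
    and H: "H \<le> ennreal 2 * P + ennreal 2 * M" and P: "P \<le> ennreal C * Q"
    and Q: "Q \<le> ennreal 2 * X + ennreal (2 * B\<^sup>2) * N"
  shows "H \<le> ennreal (4 * C) * X + ennreal (4 * C * B\<^sup>2 + 2) * (M + N)"
proof -
  have "H \<le> ennreal 2 * (ennreal C * (ennreal 2 * X + ennreal (2 * B\<^sup>2) * N)) + ennreal 2 * M"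
    using H P Q by (meson add_right_mono mult_left_mono order.trans zero_le)
  also have "\<dots> = ennreal (4 * C) * X + ennreal (4 * C * B\<^sup>2) * N + ennreal 2 * M"
  proof -
    have "ennreal (4 * C) = ennreal 2 * (ennreal C * ennreal 2)"
      "ennreal (4 * C * B\<^sup>2) = ennreal 2 * (ennreal C * ennreal (2 * B\<^sup>2))"
      using C by (simp_all add: ennreal_mult' mult_ac)
    then show ?thesis
      by (simp only: distrib_left mult.assoc)
  qed
  also have "\<dots> \<le> ennreal (4 * C) * X + ennreal (4 * C * B\<^sup>2 + 2) * (M + N)"
  proof -
    have "ennreal (4 * C * B\<^sup>2) * N \<le> ennreal (4 * C * B\<^sup>2 + 2) * N"
      "ennreal 2 * M \<le> ennreal (4 * C * B\<^sup>2 + 2) * M"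
      using C by (auto intro!: mult_right_mono ennreal_leI)
    then show ?thesis
      by (simp add: distrib_left add.assoc add_left_mono add_mono add.commute[of "_ * M"])
  qed
  finally show ?thesis .
qed

lemma ennreal_le_of_tendsto_bound:
  fixes S :: "nat \<Rightarrow> ennreal"
  assumes "\<And>k. x \<le> a + c * S k" "S \<longlonglongrightarrow> 0" "c < \<infinity>"
  shows "x \<le> a"
proof -
  have "(\<lambda>k. a + c * S k) \<longlonglongrightarrow> a + c * 0"
    using assms(2,3) by (intro tendsto_add tendsto_const ennreal_tendsto_cmult) auto
  then show ?thesis
    using LIMSEQ_le_const[of _ _ x] assms(1) by auto
qed

lemma H1_0_L2sq_le:
  fixes \<Omega> :: "'a::euclidean_space set" and b :: "'a \<Rightarrow> 'a"
  assumes \<Omega>: "open \<Omega>" and b: "continuous_on \<Omega> b" "\<forall>x\<in>\<Omega>. norm (b x) \<le> B"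
    and C: "0 \<le> C"
    and test: "\<And>\<phi>. test_fun \<Omega> \<phi> \<Longrightarrow> L2sq \<Omega> \<phi> \<le> ennreal C * L2sq \<Omega> (\<lambda>x. b x \<bullet> grad \<phi> x)"
    and h: "H1_0 \<Omega> h g"
  shows "L2sq \<Omega> h \<le> ennreal (4 * C) * L2sq \<Omega> (\<lambda>x. b x \<bullet> g x)"
proof -
  obtain \<phi> where \<phi>: "\<And>k. test_fun \<Omega> (\<phi> k)"
    and lim: "(\<lambda>k. L2sq \<Omega> (\<lambda>x. \<phi> k x - h x) + L2sq \<Omega> (\<lambda>x. norm (grad (\<phi> k) x - g x))) \<longlonglongrightarrow> 0"
    using h unfolding H1_0_def by blast
  have [measurable]: "h \<in> borel_measurable lborel" "g \<in> borel_measurable lborel" "\<Omega> \<in> sets lborel"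
    using h \<Omega> unfolding H1_0_def H1_def by auto
  have "(\<lambda>x. indicator \<Omega> x *\<^sub>R b x) \<in> borel_measurable lborel"
    using borel_measurable_continuous_on_indicator[OF _ b(1)] \<Omega> by simp
  then have "(\<lambda>x. (indicator \<Omega> x *\<^sub>R b x) \<bullet> g x) \<in> borel_measurable lborel"
    by measurable
  moreover have "(\<lambda>x. (indicator \<Omega> x *\<^sub>R b x) \<bullet> g x) = (\<lambda>x. indicator \<Omega> x * (b x \<bullet> g x))"
    by (simp add: fun_eq_iff)
  ultimately have b_meas: "(\<lambda>x. indicator \<Omega> x * (b x \<bullet> g x)) \<in> borel_measurable lborel"
    by simp
  have "L2sq \<Omega> h \<le> ennreal (4 * C) * L2sq \<Omega> (\<lambda>x. b x \<bullet> g x) + ennreal (4 * C * B\<^sup>2 + 2)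
          * (L2sq \<Omega> (\<lambda>x. \<phi> k x - h x) + L2sq \<Omega> (\<lambda>x. norm (grad (\<phi> k) x - g x)))" for k
  proof (rule ennreal_two_step_bound[OF C _ test[OF \<phi>] L2sq_inner_diff_le[OF b(2) b_meas]])
    have "Ck 1 UNIV (\<phi> k)"
      using test_funE[OF \<phi>[of k]] by blast
    then have [measurable]: "\<phi> k \<in> borel_measurable lborel" "grad (\<phi> k) \<in> borel_measurable lborel"
      using Ck1_continuous_on_grad[of UNIV "\<phi> k"] by (auto intro: borel_measurable_continuous_onI)
    show "(\<lambda>x. indicator \<Omega> x * norm (grad (\<phi> k) x - g x)) \<in> borel_measurable lborel"
      by measurable
    show "L2sq \<Omega> h \<le> ennreal 2 * L2sq \<Omega> (\<phi> k) + ennreal 2 * L2sq \<Omega> (\<lambda>x. \<phi> k x - h x)"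
      using square_add_le[of "\<phi> k x" "h x - \<phi> k x" for x]
      by (intro L2sq_le_combination) (auto simp: power2_commute)
  qed
  then show ?thesis
    by (rule ennreal_le_of_tendsto_bound) (use lim in simp_all)
qed

lemma compact_continuous_on_pos_bounds:
  fixes f :: "'a::metric_space \<Rightarrow> real"
  assumes "compact S" "continuous_on S f" "\<forall>x\<in>S. 0 < f x"
  obtains m M where "0 < m" "m \<le> M" "\<forall>x\<in>S. m \<le> f x \<and> f x \<le> M"
proof (cases "S = {}")
  case True
  then show ?thesis
    using that[of 1 1] by simp
next
  case False
  obtain y where y: "y \<in> S" "\<forall>x\<in>S. f y \<le> f x"
    using continuous_attains_inf[OF assms(1) False assms(2)] by blast
  obtain z where z: "z \<in> S" "\<forall>x\<in>S. f x \<le> f z"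
    using continuous_attains_sup[OF assms(1) False assms(2)] by blast
  show ?thesis
  proof (rule that)
    show "0 < f y"
      using assms(3) y(1) by blast
    show "f y \<le> f z" "\<forall>x\<in>S. f y \<le> f x \<and> f x \<le> f z"
      using y z by auto
  qed
qed

lemma bounded_closure_pos_bounds:
  fixes f :: "'a::heine_borel \<Rightarrow> real"
  assumes "bounded \<Omega>" "continuous_on (closure \<Omega>) f" "\<forall>x\<in>closure \<Omega>. 0 < f x"
  obtains m M where "0 < m" "m \<le> M" "\<forall>x\<in>\<Omega>. m \<le> f x" "\<forall>x\<in>\<Omega>. f x \<le> M"
proof -
  have "compact (closure \<Omega>)"
    using assms(1) by simp
  from compact_continuous_on_pos_bounds[OF this assms(2,3)]
  obtain m M where "0 < m" "m \<le> M" "\<forall>x\<in>closure \<Omega>. m \<le> f x \<and> f x \<le> M"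
    by blast
  moreover have "\<Omega> \<subseteq> closure \<Omega>"
    by (rule closure_subset)
  ultimately show ?thesis
    using that by blast
qed

lemma C2_closureD:
  assumes "open \<Omega>" "C2_closure \<Omega> s"
  shows "Ck 2 \<Omega> s" "continuous_on (closure \<Omega>) s"
proof -
  obtain U F where U: "closure \<Omega> \<subseteq> U" "Ck 2 U F" and F: "\<forall>x\<in>closure \<Omega>. F x = s x"
    using assms(2) unfolding C2_closure_def by blast
  have "Ck 2 \<Omega> F"
    using Ck_subset[OF U(2)] U(1) closure_subset by blast
  then show "Ck 2 \<Omega> s"
    using Ck_cong_open[OF assms(1), of F s] F closure_subset by blast
  have "continuous_on U F"
    using U(2) by (simp add: numeral_2_eq_2)
  then show "continuous_on (closure \<Omega>) s"
    using continuous_on_subset[OF _ U(1)] F continuous_on_eq by blast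
qed

theorem lemma3p2:
  fixes \<Omega> :: "'a::euclidean_space set"
    and \<sigma>0 u0 f :: "'a \<Rightarrow> real"
    and \<alpha> :: real
  assumes "bounded \<Omega>" and "open \<Omega>" and "simply_connected \<Omega>" and "smooth_boundary \<Omega>"
    and "C2_closure \<Omega> \<sigma>0" and "\<forall>x\<in>closure \<Omega>. \<sigma>0 x > 0"
    and "0 < \<alpha>" and "\<alpha> < 1" and "C2alpha_boundary \<alpha> \<Omega> f"
    and "Ck 2 \<Omega> u0"
    and "\<forall>x\<in>\<Omega>. divergence (\<lambda>y. \<sigma>0 y *\<^sub>R grad u0 y) x = 0"
    and "continuous_on (closure \<Omega>) u0" and "\<forall>x\<in>frontier \<Omega>. u0 x = f x"
    and "\<exists>G. continuous_on (closure \<Omega>) G \<and> (\<forall>x\<in>\<Omega>. G x = grad u0 x)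
              \<and> (\<forall>x\<in>closure \<Omega>. G x \<noteq> 0)"
  shows "\<exists>C>0. \<forall>h g. H1_0 \<Omega> h g \<longrightarrow>
           L2sq \<Omega> h \<le> ennreal (C\<^sup>2) * L2sq \<Omega> (\<lambda>x. grad u0 x \<bullet> g x)"
proof -
  obtain G where G: "continuous_on (closure \<Omega>) G" "\<forall>x\<in>\<Omega>. G x = grad u0 x" "\<forall>x\<in>closure \<Omega>. G x \<noteq> 0"
    using assms(14) by blast
  have \<sigma>0: "Ck 1 \<Omega> \<sigma>0" "continuous_on (closure \<Omega>) \<sigma>0"
    using C2_closureD[OF assms(2,5)] Ck_Suc_imp_Ck[of 1 \<Omega> \<sigma>0] by (simp_all add: numeral_2_eq_2)
  have "\<forall>x\<in>closure \<Omega>. 0 < norm (G x)"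
    using G(3) by simp
  then obtain c B where "0 < c" "c \<le> B" "\<forall>x\<in>\<Omega>. c \<le> norm (G x)" "\<forall>x\<in>\<Omega>. norm (G x) \<le> B"
    by (rule bounded_closure_pos_bounds[OF assms(1) continuous_on_norm[OF G(1)]])
  then have c: "0 < c" "\<forall>x\<in>\<Omega>. c \<le> norm (grad u0 x)" "\<forall>x\<in>\<Omega>. norm (grad u0 x) \<le> B"
    using G(2) by simp_all
  have "continuous_on (closure \<Omega>) (\<lambda>x. exp (u0 x) * \<sigma>0 x)" "\<forall>x\<in>closure \<Omega>. 0 < exp (u0 x) * \<sigma>0 x"
    using assms(6,12) \<sigma>0(2) by (auto intro!: continuous_intros)
  then obtain m M where m: "0 < m" "m \<le> M"
    "\<forall>x\<in>\<Omega>. m \<le> exp (u0 x) * \<sigma>0 x" "\<forall>x\<in>\<Omega>. exp (u0 x) * \<sigma>0 x \<le> M"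
    by (rule bounded_closure_pos_bounds[OF assms(1)])
  have "continuous_on \<Omega> (grad u0)"
    using continuous_on_eq[OF continuous_on_subset[OF G(1) closure_subset]] G(2) by auto
  define C0 where "C0 = 4 * M\<^sup>2 / (m * c\<^sup>2)\<^sup>2"
  have "0 < C0"
    using m c by (simp add: C0_def)
  note test_bound = test_fun_L2sq_le[OF assms(2) \<sigma>0(1) assms(10,11) m(1,3,4) c(1,2), folded C0_def]
  have "L2sq \<Omega> h \<le> ennreal ((2 * sqrt C0)\<^sup>2) * L2sq \<Omega> (\<lambda>x. grad u0 x \<bullet> g x)" if "H1_0 \<Omega> h g" for h g
    using H1_0_L2sq_le[OF assms(2) \<open>continuous_on \<Omega> (grad u0)\<close> c(3) _ test_bound that] \<open>0 < C0\<close>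
    by (simp add: power_mult_distrib)
  then show ?thesis
    using \<open>0 < C0\<close> by (intro exI[of _ "2 * sqrt C0"]) auto
qed

end
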